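(* Let $K$ be a field, $S=K[x_1,\ldots,x_n]$, $I\subset S$ a monomial ideal with $I\ne S$, with $\mathbb{Z}^n$-graded minimal free resolution of $S/I$, multidegrees $a_{ij}$ and scalar matrices $\lambda^{(i)}$ as in the context. Given $1<i\le p$ and $1\le j\le\beta_i$, let $k_1,\ldots,k_r$ be the integers $k$ with $\lambda^{(i)}_{kj}\ne0$. Then \[ x^{a_{ij}}=\operatorname{lcm}(x^{a_{i-1,k_1}},\ldots,x^{a_{i-1,k_r}}). \]
   Context: For $a\in\mathbb{N}^n$, $x^a=x_1^{a(1)}\cdots x_n^{a(n)}$. Let $0\to F_p\to\cdots\to F_1\to F_0\to S/I\to 0$ be the $\mathbb{Z}^n$-graded minimal free resolution of $S/I$ with differential $\partial$, where $F_0=S$ with basis $f_{01}$ of degree $0$, and $F_i=\bigoplus_{j=1}^{\beta_i}Sf_{ij}$ with $f_{ij}$ homogeneous of multidegree $a_{ij}\in\mathbb{N}^n$. Write $\partial(f_{ij})=\sum_k\lambda^{(i)}_{kj}x^{a_{ij}-a_{i-1,k}}f_{i-1,k}$ with $\lambda^{(i)}_{kj}\in K$, where $\lambda^{(i)}_{kj}=0$ whenever $a_{ij}-a_{i-1,k}\notin\mathbb{N}^n$. *)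

theory Defs
  imports "HOL-Library.Poly_Mapping"
begin

text \<open>Polynomial ring S = K[x_v | v :: 'n] (with 'n a finite type of n variables) is
  represented as a finitely supported map from exponent vectors
  (multidegrees in N^n) to coefficients, with the convolution product of Poly_Mapping.\<close>

type_synonym ('n, 'k) mpoly = "('n \<Rightarrow>\<^sub>0 nat) \<Rightarrow>\<^sub>0 'k"

definition monom :: "('n \<Rightarrow>\<^sub>0 nat) \<Rightarrow> ('n, 'k::comm_ring_1) mpoly" where
  "monom a = Poly_Mapping.single a 1"

definition const :: "'k::comm_ring_1 \<Rightarrow> ('n, 'k) mpoly" where
  "const c = Poly_Mapping.single 0 c"

definition mdeg_le :: "('n \<Rightarrow>\<^sub>0 nat) \<Rightarrow> ('n \<Rightarrow>\<^sub>0 nat) \<Rightarrow> bool" where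
  "mdeg_le a b \<longleftrightarrow> (\<forall>v. Poly_Mapping.lookup a v \<le> Poly_Mapping.lookup b v)"

definition is_ideal :: "'a::comm_ring_1 set \<Rightarrow> bool" where
  "is_ideal I \<longleftrightarrow> 0 \<in> I \<and> (\<forall>x\<in>I. \<forall>y\<in>I. x + y \<in> I) \<and> (\<forall>r. \<forall>x\<in>I. r * x \<in> I)"

definition ideal_gen :: "'a::comm_ring_1 set \<Rightarrow> 'a set" where
  "ideal_gen G = \<Inter>{J. is_ideal J \<and> G \<subseteq> J}"

definition monomial_ideal :: "('n, 'k::comm_ring_1) mpoly set \<Rightarrow> bool" where
  "monomial_ideal I \<longleftrightarrow> is_ideal I \<and> (\<exists>A. I = ideal_gen (monom ` A))"

definition max_ideal :: "('n, 'k::comm_ring_1) mpoly set" where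
  "max_ideal = {f. Poly_Mapping.lookup f 0 = 0}"

text \<open>F_i = S^{beta_i}, elements u with u j the coefficient of basis element f_ij, j \<in> {1..beta i}\<close>
definition freemod :: "(nat \<Rightarrow> nat) \<Rightarrow> nat \<Rightarrow> (nat \<Rightarrow> ('n, 'k::comm_ring_1) mpoly) set" where
  "freemod \<beta> i = {u. \<forall>j. j \<notin> {1..\<beta> i} \<longrightarrow> u j = 0}"

text \<open>the differential F_i \<rightarrow> F_{i-1}, \<partial>(f_ij) = \<Sum>_k lam i k j x^(a_ij - a_{i-1,k}) f_{i-1,k}\<close>
definition dmap :: "(nat \<Rightarrow> nat) \<Rightarrow> (nat \<Rightarrow> nat \<Rightarrow> ('n \<Rightarrow>\<^sub>0 nat)) \<Rightarrow> (nat \<Rightarrow> nat \<Rightarrow> nat \<Rightarrow> 'k::comm_ring_1)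
     \<Rightarrow> nat \<Rightarrow> (nat \<Rightarrow> ('n, 'k) mpoly) \<Rightarrow> (nat \<Rightarrow> ('n, 'k) mpoly)" where
  "dmap \<beta> a lam i u = (\<lambda>k. if k \<in> {1..\<beta> (i - 1)}
      then (\<Sum>j = 1..\<beta> i. const (lam i k j) * monom (a i j - a (i - 1) k) * u j) else 0)"

definition min_graded_free_res ::
  "('n, 'k::comm_ring_1) mpoly set \<Rightarrow> nat \<Rightarrow> (nat \<Rightarrow> nat) \<Rightarrow> (nat \<Rightarrow> nat \<Rightarrow> ('n \<Rightarrow>\<^sub>0 nat))
     \<Rightarrow> (nat \<Rightarrow> nat \<Rightarrow> nat \<Rightarrow> 'k) \<Rightarrow> bool" where
  "min_graded_free_res I p \<beta> a lam \<longleftrightarrow>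
     \<beta> 0 = 1 \<and> a 0 1 = 0 \<and>
     (\<forall>i\<in>{1..p}. \<forall>j\<in>{1..\<beta> i}. \<forall>k\<in>{1..\<beta> (i - 1)}.
         \<not> mdeg_le (a (i - 1) k) (a i j) \<longrightarrow> lam i k j = 0) \<and>
     \<comment> \<open>exactness at F_0: the image of F_1 \<rightarrow> F_0 = S is I\<close>
     (\<lambda>u. dmap \<beta> a lam 1 u 1) ` freemod \<beta> 1 = I \<and>
     \<comment> \<open>exactness at F_i, 1 \<le> i < p\<close>
     (\<forall>i. 1 \<le> i \<and> i < p \<longrightarrow>
         {u \<in> freemod \<beta> i. dmap \<beta> a lam i u = (\<lambda>_. 0)} = dmap \<beta> a lam (i + 1) ` freemod \<beta> (i + 1)) \<and>
     \<comment> \<open>exactness at F_p: F_p \<rightarrow> F_{p-1} injective\<close>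
     (1 \<le> p \<longrightarrow> {u \<in> freemod \<beta> p. dmap \<beta> a lam p u = (\<lambda>_. 0)} = {\<lambda>_. 0}) \<and>
     \<comment> \<open>minimality: \<partial>(F_i) \<subseteq> m F_{i-1}\<close>
     (\<forall>i\<in>{1..p}. \<forall>u\<in>freemod \<beta> i. \<forall>k. dmap \<beta> a lam i u k \<in> max_ideal)"

definition is_lcm :: "'a::comm_ring_1 \<Rightarrow> 'a set \<Rightarrow> bool" where
  "is_lcm m A \<longleftrightarrow> (\<forall>f\<in>A. f dvd m) \<and> (\<forall>g. (\<forall>f\<in>A. f dvd g) \<longrightarrow> m dvd g)"

end

theory Submission
  imports Defs
begin

text \<open>Every \<open>x^{a_{i-1,k}}\<close> with \<open>\<lambda>^{(i)}_{kj} \<noteq> 0\<close> divides \<open>x^{a_{ij}}\<close> by homogeneity of \<open>\<partial>\<close>,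
  so their lcm \<open>x^b\<close> does too and \<open>\<partial>(f_{ij}) = x^c g\<close> with \<open>c = a_{ij} - b\<close>.
  As \<open>\<partial>\<partial> = 0\<close> and \<open>x^c\<close> is a nonzerodivisor, \<open>g\<close> is a cycle, hence \<open>g = \<partial>h\<close> by
  exactness. Then \<open>f_{ij} - x^c h\<close> is a cycle; if \<open>c \<noteq> 0\<close> its \<open>f_{ij}\<close>-coefficient has
  constant term 1, which minimality forbids. So \<open>c = 0\<close>.\<close>

lemma lookup_monom_mult:
  fixes f :: "('n, 'k::comm_ring_1) mpoly"
  shows "Poly_Mapping.lookup (monom c * f) (c + x) = Poly_Mapping.lookup f x"
proof -
  have "Poly_Mapping.lookup (monom c * f) (c + x)
      = (\<Sum>l. (\<Sum>q. Poly_Mapping.lookup f q when c + x = l + q) when c = l)"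
    by (simp add: monom_def lookup_mult lookup_single when_mult)
  also have "\<dots> = (\<Sum>q. Poly_Mapping.lookup f q when x = q)" by simp
  finally show ?thesis by simp
qed

lemma keys_monom_mult:
  fixes f :: "('n, 'k::comm_ring_1) mpoly"
  shows "Poly_Mapping.keys (monom c * f) \<subseteq> (+) c ` Poly_Mapping.keys f"
  using keys_mult[of "monom c" f] by (auto simp: monom_def)

lemma keys_monom [simp]: "Poly_Mapping.keys (monom d :: ('n, 'k::comm_ring_1) mpoly) = {d}"
  by (simp add: monom_def)

lemma monom_mult: "(monom a :: ('n, 'k::comm_ring_1) mpoly) * monom b = monom (a + b)"
  by (simp add: monom_def mult_single)

lemma monom_mult_eq_0_iff:
  fixes f :: "('n, 'k::comm_ring_1) mpoly"
  shows "monom c * f = 0 \<longleftrightarrow> f = 0"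
  by (metis lookup_monom_mult lookup_zero mult_zero_right poly_mapping_eqI)

lemma lookup_monom_mult_0:
  fixes f :: "('n, 'k::comm_ring_1) mpoly"
  assumes "c \<noteq> 0"
  shows "Poly_Mapping.lookup (monom c * f) 0 = 0"
proof (rule ccontr)
  assume "Poly_Mapping.lookup (monom c * f) 0 \<noteq> 0"
  then have "0 \<in> (+) c ` Poly_Mapping.keys f"
    using keys_monom_mult[of c f] by (auto simp: in_keys_iff)
  with assms show False by (auto simp: poly_mapping_eq_iff fun_eq_iff lookup_add)
qed

lemma mdeg_le_add: "mdeg_le c (c + q)"
  by (simp add: mdeg_le_def lookup_add)

lemma mdeg_le_add_diff: "mdeg_le c d \<Longrightarrow> c + (d - c) = d"
  by (rule poly_mapping_eqI) (simp add: mdeg_le_def lookup_add lookup_minus)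

lemma monom_dvd_iff:
  fixes f :: "('n, 'k::comm_ring_1) mpoly"
  shows "monom e dvd f \<longleftrightarrow> (\<forall>d\<in>Poly_Mapping.keys f. mdeg_le e d)"
proof
  assume "monom e dvd f"
  then obtain q where "f = monom e * q" by (auto elim: dvdE)
  then show "\<forall>d\<in>Poly_Mapping.keys f. mdeg_le e d"
    using keys_monom_mult[of e q] mdeg_le_add by blast
next
  assume keys_ge: "\<forall>d\<in>Poly_Mapping.keys f. mdeg_le e d"
  have "{d. Poly_Mapping.lookup f (e + d) \<noteq> 0} \<subseteq> (\<lambda>d. d - e) ` Poly_Mapping.keys f"
    by (force simp: in_keys_iff)
  then have fin: "finite {d. Poly_Mapping.lookup f (e + d) \<noteq> 0}"
    by (rule finite_subset) simp
  define q where "q = Abs_poly_mapping (\<lambda>d. Poly_Mapping.lookup f (e + d))"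
  have "f = monom e * q"
  proof (rule poly_mapping_eqI)
    fix d
    show "Poly_Mapping.lookup f d = Poly_Mapping.lookup (monom e * q) d"
    proof (cases "mdeg_le e d")
      case True
      then show ?thesis
        using fin lookup_monom_mult[of e q "d - e"] by (simp add: q_def mdeg_le_add_diff)
    next
      case False
      then have "d \<notin> Poly_Mapping.keys f" "d \<notin> Poly_Mapping.keys (monom e * q)"
        using keys_ge keys_monom_mult[of e q] mdeg_le_add by blast+
      then show ?thesis by (simp add: in_keys_iff)
    qed
  qed
  then show "monom e dvd f" by simp
qed

definition mdeg_lcm :: "('n \<Rightarrow>\<^sub>0 nat) set \<Rightarrow> 'n \<Rightarrow>\<^sub>0 nat" where
  "mdeg_lcm D = Abs_poly_mapping (\<lambda>v. Max (insert 0 ((\<lambda>d. Poly_Mapping.lookup d v) ` D)))"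

lemma lookup_mdeg_lcm:
  assumes "finite D"
  shows "Poly_Mapping.lookup (mdeg_lcm D) v = Max (insert 0 ((\<lambda>d. Poly_Mapping.lookup d v) ` D))"
proof -
  have "{v. Max (insert 0 ((\<lambda>d. Poly_Mapping.lookup d v) ` D)) \<noteq> 0} \<subseteq> (\<Union>d\<in>D. Poly_Mapping.keys d)"
    using assms by (auto simp: in_keys_iff Max_eq_iff)
  then have "finite {v. Max (insert 0 ((\<lambda>d. Poly_Mapping.lookup d v) ` D)) \<noteq> 0}"
    by (rule finite_subset) (simp add: assms)
  then show ?thesis by (simp add: mdeg_lcm_def)
qed

lemma mdeg_le_mdeg_lcm: "finite D \<Longrightarrow> d \<in> D \<Longrightarrow> mdeg_le d (mdeg_lcm D)"
  by (simp add: mdeg_le_def lookup_mdeg_lcm)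

lemma mdeg_lcm_least: "finite D \<Longrightarrow> (\<And>d. d \<in> D \<Longrightarrow> mdeg_le d e) \<Longrightarrow> mdeg_le (mdeg_lcm D) e"
  by (simp add: mdeg_le_def lookup_mdeg_lcm)

lemma is_lcm_monom_mdeg_lcm:
  assumes "finite D"
  shows "is_lcm (monom (mdeg_lcm D) :: ('n, 'k::comm_ring_1) mpoly) (monom ` D)"
  unfolding is_lcm_def
proof (intro conjI ballI allI impI)
  fix f :: "('n, 'k) mpoly"
  assume "f \<in> monom ` D"
  then show "f dvd monom (mdeg_lcm D)"
    using assms by (auto simp: monom_dvd_iff intro: mdeg_le_mdeg_lcm)
next
  fix g :: "('n, 'k) mpoly"
  assume "\<forall>f\<in>monom ` D. f dvd g"
  then show "monom (mdeg_lcm D) dvd g"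
    using assms by (auto simp: monom_dvd_iff intro: mdeg_lcm_least)
qed

lemma dmap_scale: "dmap \<beta> a lam i (\<lambda>k. m * u k) = (\<lambda>k. m * dmap \<beta> a lam i u k)"
  by (rule ext) (simp add: dmap_def sum_distrib_left mult.left_commute)

lemma dmap_diff:
  "dmap \<beta> a lam i (\<lambda>k. u k - v k) = (\<lambda>k. dmap \<beta> a lam i u k - dmap \<beta> a lam i v k)"
  by (rule ext) (simp add: dmap_def sum_subtractf right_diff_distrib)

definition basis_vec :: "nat \<Rightarrow> nat \<Rightarrow> ('n, 'k::comm_ring_1) mpoly" where
  "basis_vec j = (\<lambda>k. if k = j then 1 else 0)"

lemma basis_vec_in_freemod: "j \<in> {1..\<beta> i} \<Longrightarrow> basis_vec j \<in> freemod \<beta> i"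
  by (auto simp: freemod_def basis_vec_def)

lemma dmap_basis_vec:
  assumes "j \<in> {1..\<beta> i}"
  shows "dmap \<beta> a lam i (basis_vec j) = (\<lambda>k. if k \<in> {1..\<beta> (i - 1)}
           then const (lam i k j) * monom (a i j - a (i - 1) k) else 0)"
  using assms by (simp add: dmap_def basis_vec_def if_distrib[of "(*) _"] sum.delta cong: if_cong)

context
  fixes I :: "('n, 'k::comm_ring_1) mpoly set"
    and p :: nat and \<beta> :: "nat \<Rightarrow> nat" and a :: "nat \<Rightarrow> nat \<Rightarrow> ('n \<Rightarrow>\<^sub>0 nat)"
    and lam :: "nat \<Rightarrow> nat \<Rightarrow> nat \<Rightarrow> 'k"
  assumes res: "min_graded_free_res I p \<beta> a lam"
begin

lemma res_coeff_nonzero_imp_mdeg_le: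
  assumes "i \<in> {1..p}" "j \<in> {1..\<beta> i}" "k \<in> {1..\<beta> (i - 1)}" "lam i k j \<noteq> 0"
  shows "mdeg_le (a (i - 1) k) (a i j)"
  using res assms unfolding min_graded_free_res_def by blast

lemma res_exact:
  assumes "1 \<le> i" "i < p" "u \<in> freemod \<beta> i" "dmap \<beta> a lam i u = (\<lambda>_. 0)"
  shows "\<exists>v\<in>freemod \<beta> (i + 1). u = dmap \<beta> a lam (i + 1) v"
  using res assms unfolding min_graded_free_res_def by blast

lemma res_dmap_dmap:
  assumes "1 \<le> i" "i < p" "u \<in> freemod \<beta> (i + 1)"
  shows "dmap \<beta> a lam i (dmap \<beta> a lam (i + 1) u) = (\<lambda>_. 0)"
proof -
  have "dmap \<beta> a lam (i + 1) u \<in> {v \<in> freemod \<beta> i. dmap \<beta> a lam i v = (\<lambda>_. 0)}"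
    using res assms unfolding min_graded_free_res_def by blast
  then show ?thesis by simp
qed

lemma res_syzygy_in_max_ideal:
  assumes "i \<in> {1..p}" "u \<in> freemod \<beta> i" "dmap \<beta> a lam i u = (\<lambda>_. 0)"
  shows "u k \<in> max_ideal"
proof (cases "i < p")
  case True
  then obtain v where "v \<in> freemod \<beta> (i + 1)" "u = dmap \<beta> a lam (i + 1) v"
    using res_exact assms by auto
  moreover have "i + 1 \<in> {1..p}" using True by simp
  ultimately show ?thesis using res unfolding min_graded_free_res_def by blast
next
  case False
  then have "u = (\<lambda>_. 0)"
    using res assms unfolding min_graded_free_res_def by auto
  then show ?thesis by (simp add: max_ideal_def)
qed

lemma res_dmap_basis_vec_monom_factor:
  assumes "1 < i" "i \<le> p" "j \<in> {1..\<beta> i}" "g \<in> freemod \<beta> (i - 1)"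
    and factor: "dmap \<beta> a lam i (basis_vec j) = (\<lambda>k. monom c * g k)"
  shows "c = 0"
proof (rule ccontr)
  assume "c \<noteq> 0"
  have i_pred: "1 \<le> i - 1" "i - 1 < p" "i - 1 + 1 = i" using assms by auto
  have "(\<lambda>k. monom c * dmap \<beta> a lam (i - 1) g k) = (\<lambda>_. 0)"
    using res_dmap_dmap[of "i - 1" "basis_vec j"] i_pred assms
    by (simp add: basis_vec_in_freemod factor flip: dmap_scale)
  then have "dmap \<beta> a lam (i - 1) g = (\<lambda>_. 0)"
    by (simp add: fun_eq_iff monom_mult_eq_0_iff)
  then obtain h where h: "h \<in> freemod \<beta> i" "g = dmap \<beta> a lam i h"
    using res_exact[of "i - 1" g] i_pred assms by auto
  define u where "u = (\<lambda>k. basis_vec j k - monom c * h k)"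
  have "u \<in> freemod \<beta> i"
    using h assms basis_vec_in_freemod[of j \<beta> i] by (auto simp: freemod_def u_def)
  moreover have "dmap \<beta> a lam i u = (\<lambda>_. 0)"
    unfolding u_def dmap_diff dmap_scale factor h(2) by simp
  ultimately have "u j \<in> max_ideal"
    using res_syzygy_in_max_ideal[of i u j] assms by simp
  moreover have "Poly_Mapping.lookup (u j) 0 = 1"
    using lookup_monom_mult_0[OF \<open>c \<noteq> 0\<close>, of "h j"] by (simp add: u_def basis_vec_def lookup_minus)
  ultimately show False by (simp add: max_ideal_def)
qed

lemma res_mdeg_eq_mdeg_lcm:
  assumes "1 < i" "i \<le> p" "j \<in> {1..\<beta> i}"
  shows "a i j = mdeg_lcm {a (i - 1) k | k. k \<in> {1..\<beta> (i - 1)} \<and> lam i k j \<noteq> 0}"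
    (is "_ = mdeg_lcm ?D")
proof -
  define b where "b = mdeg_lcm ?D"
  have fin: "finite ?D" by simp
  have le_b: "mdeg_le (a (i - 1) k) b" if "k \<in> {1..\<beta> (i - 1)}" "lam i k j \<noteq> 0" for k
    unfolding b_def using that by (intro mdeg_le_mdeg_lcm[OF fin]) blast
  have b_le: "mdeg_le b (a i j)"
    unfolding b_def
  proof (rule mdeg_lcm_least[OF fin])
    fix d
    assume "d \<in> ?D"
    then obtain k where "k \<in> {1..\<beta> (i - 1)}" "lam i k j \<noteq> 0" "d = a (i - 1) k" by blast
    then show "mdeg_le d (a i j)"
      using res_coeff_nonzero_imp_mdeg_le[of i j k] assms by simp
  qed
  define g :: "nat \<Rightarrow> ('n, 'k) mpoly" where
    "g = (\<lambda>k. if k \<in> {1..\<beta> (i - 1)} then const (lam i k j) * monom (b - a (i - 1) k) else 0)"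
  have "dmap \<beta> a lam i (basis_vec j) = (\<lambda>k. monom (a i j - b) * g k)"
  proof
    fix k
    show "dmap \<beta> a lam i (basis_vec j) k = monom (a i j - b) * g k"
    proof (cases "k \<in> {1..\<beta> (i - 1)} \<and> lam i k j \<noteq> 0")
      case True
      then have "a i j - a (i - 1) k = (a i j - b) + (b - a (i - 1) k)"
        using le_b[of k] b_le
        by (intro poly_mapping_eqI) (auto simp: mdeg_le_def lookup_add lookup_minus)
      with True assms(3) show ?thesis
        by (simp add: dmap_basis_vec g_def monom_mult mult.left_commute)
    next
      case False
      with assms(3) show ?thesis by (auto simp: dmap_basis_vec g_def const_def)
    qed
  qed
  moreover have "g \<in> freemod \<beta> (i - 1)" by (simp add: freemod_def g_def)
  ultimately have "a i j - b = 0"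
    using res_dmap_basis_vec_monom_factor assms by blast
  then show ?thesis
    using mdeg_le_add_diff[OF b_le] by (simp add: b_def)
qed

end

theorem lemma1p5:
  fixes I :: "('n::finite, 'k::field) mpoly set"
    and p :: nat and \<beta> :: "nat \<Rightarrow> nat" and a :: "nat \<Rightarrow> nat \<Rightarrow> ('n \<Rightarrow>\<^sub>0 nat)"
    and lam :: "nat \<Rightarrow> nat \<Rightarrow> nat \<Rightarrow> 'k" and i j :: nat
  assumes "monomial_ideal I"
    and "I \<noteq> UNIV"
    and "min_graded_free_res I p \<beta> a lam"
    and "1 < i" and "i \<le> p"
    and "1 \<le> j" and "j \<le> \<beta> i"
  shows "is_lcm (monom (a i j) :: ('n, 'k) mpoly)
           {monom (a (i - 1) k) | k. k \<in> {1..\<beta> (i - 1)} \<and> lam i k j \<noteq> 0}"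
proof -
  let ?D = "{a (i - 1) k | k. k \<in> {1..\<beta> (i - 1)} \<and> lam i k j \<noteq> 0}"
  have gens: "{monom (a (i - 1) k) | k. k \<in> {1..\<beta> (i - 1)} \<and> lam i k j \<noteq> 0} = monom ` ?D"
    by blast
  have "a i j = mdeg_lcm ?D"
    using res_mdeg_eq_mdeg_lcm[OF assms(3)] assms(4-7) by simp
  then show ?thesis
    unfolding gens using is_lcm_monom_mdeg_lcm[of ?D] by simp
qed

end
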